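(* The class of Subgraph MPNNs can count $3$-cycles, $4$-cycles, $2$-paths and $3$-paths at node level. That is, for $S$ any one of these substructures and for all node-graph pairs $(i_1,G_1),(i_2,G_2)$ with $C(S,i_1,G_1)\neq C(S,i_2,G_2)$, there exists a Subgraph MPNN whose node representations satisfy $h_{i_1}(G_1)\neq h_{i_2}(G_2)$.
   Context: Graphs are finite, simple, undirected, $G=(V,E)$, possibly carrying node attributes $x_v$ and edge attributes $e_{u,v}$ (a fixed constant when absent). $N(v)$ is the neighbour set of $v$. For $L\ge 1$, an $L$-path is a sequence of edges $(v_1,v_2),\dots,(v_L,v_{L+1})$ of $G$ with $v_1,\dots,v_{L+1}$ pairwise distinct; for $L\ge 3$, an $L$-cycle is such a sequence with $v_1,\dots,v_L$ pairwise distinct and $v_{L+1}=v_1$. Two paths (resp. cycles) are identified when their edge sets coincide. $C(L\text{-cycle},i,G)$ is the number of inequivalent $L$-cycles containing node $i$; $C(L\text{-path},i,G)$ is the number of inequivalent $L$-paths starting from $i$ (i.e. with $v_1=i$). A class $\mathcal F$ of functions on node-graph pairs can count $S$ at node level if for all $(i_1,G_1),(i_2,G_2)$ with $C(S,i_1,G_1)\ne C(S,i_2,G_2)$ there is $f\in\mathcal F$ with $f(i_1,G_1)\ne f(i_2,G_2)$. Subgraph MPNNs. A Subgraph MPNN is specified by: (1) a subgraph extraction rule, either node deletion, $(V_i,E_i)=(V\setminus\{i\},E\setminus\{(i,j):j\in N(i)\})$, or the $K$-hop ego-network for some integer $K\ge1$, i.e. $(V_i,E_i)$ is the subgraph of $G$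 induced by the nodes at shortest-path distance at most $K$ from $i$; (2) a node labeling $z_{i,j}$, which is either absent, identity labeling $z_{i,j}=\mathbb 1_{i=j}$, or shortest path distance $z_{i,j}=\mathrm{spd}(i,j)$; (3) a number of layers $T$ and arbitrary functions $M_t$ (with values in some $\mathbb R^{d_t}$) and $U_t$; (4) an arbitrary readout $R_{\text{node}}$ on finite multisets. For each root $i\in V$ and $j\in V_i$: $h^{(0)}_{i,j}=x_j\oplus z_{i,j}$, $h^{(t+1)}_{i,j}=U_t\big(h^{(t)}_{i,j},\sum_{k\in N_i(j)}M_t(h^{(t)}_{i,j},h^{(t)}_{i,k},e_{j,k})\big)$ with $N_i(j)=\{k\in V_i:(j,k)\in E_i\}$, and the node representation is $h_i=R_{\text{node}}(\{\!\{h^{(T)}_{i,j}:j\in V_i\}\!\})$. The node-level function computed is $(i,G)\mapsto h_i$; the class of Subgraph MPNNs consists of all such choices. *)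

theory Defs
  imports Main "HOL-Library.Multiset" "HOL-Library.Function_Algebras" "HOL-Library.Extended_Nat"
begin

text \<open>Node attributes and edge attributes are real vectors (lists of reals).
  A constant edge attribute models the case of absent edge attributes.\<close>

record 'v graph =
  verts :: "'v set"
  adj   :: "'v \<Rightarrow> 'v \<Rightarrow> bool"
  nattr :: "'v \<Rightarrow> real list"
  eattr :: "'v \<Rightarrow> 'v \<Rightarrow> real list"

definition wf_graph :: "('v, 'b) graph_scheme \<Rightarrow> bool" where
  "wf_graph G \<longleftrightarrow> finite (verts G)
     \<and> (\<forall>u v. adj G u v \<longrightarrow> u \<in> verts G \<and> v \<in> verts G)
     \<and> (\<forall>u v. adj G u v \<longrightarrow> adj G v u)
     \<and> (\<forall>u. \<not> adj G u u)
     \<and> (\<forall>u v. eattr G u v = eattr G v u)"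

definition neighbours :: "('v, 'b) graph_scheme \<Rightarrow> 'v \<Rightarrow> 'v set" where
  "neighbours G v = {u. adj G v u}"

definition is_path :: "('v, 'b) graph_scheme \<Rightarrow> nat \<Rightarrow> 'v list \<Rightarrow> bool" where
  "is_path G L vs \<longleftrightarrow> L \<ge> 1 \<and> length vs = L + 1 \<and> distinct vs
     \<and> (\<forall>k < L. adj G (vs ! k) (vs ! (k + 1)))"

definition path_edges :: "nat \<Rightarrow> 'v list \<Rightarrow> 'v set set" where
  "path_edges L vs = (\<lambda>k. {vs ! k, vs ! (k + 1)}) ` {..<L}"

definition is_cycle :: "('v, 'b) graph_scheme \<Rightarrow> nat \<Rightarrow> 'v list \<Rightarrow> bool" where
  "is_cycle G L vs \<longleftrightarrow> L \<ge> 3 \<and> length vs = L \<and> distinct vs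
     \<and> (\<forall>k < L. adj G (vs ! k) (vs ! ((k + 1) mod L)))"

definition cycle_edges :: "nat \<Rightarrow> 'v list \<Rightarrow> 'v set set" where
  "cycle_edges L vs = (\<lambda>k. {vs ! k, vs ! ((k + 1) mod L)}) ` {..<L}"

datatype substructure = Cycle nat | Path nat

fun count :: "substructure \<Rightarrow> ('v, 'b) graph_scheme \<Rightarrow> 'v \<Rightarrow> nat" where
  "count (Cycle L) G i = card {cycle_edges L vs | vs. is_cycle G L vs \<and> i \<in> set vs}"
| "count (Path L) G i = card {path_edges L vs | vs. is_path G L vs \<and> hd vs = i}"

definition walk :: "('v, 'b) graph_scheme \<Rightarrow> nat \<Rightarrow> 'v \<Rightarrow> 'v \<Rightarrow> bool" where
  "walk G n i j \<longleftrightarrow> (\<exists>vs. length vs = n + 1 \<and> hd vs = i \<and> last vs = j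
      \<and> set vs \<subseteq> verts G \<and> (\<forall>k < n. adj G (vs ! k) (vs ! (k + 1))))"

definition spd :: "('v, 'b) graph_scheme \<Rightarrow> 'v \<Rightarrow> 'v \<Rightarrow> enat" where
  "spd G i j = (if \<exists>n. walk G n i j then enat (LEAST n. walk G n i j) else \<infinity>)"

datatype extraction = NodeDeletion | EgoNet nat
datatype labeling = NoLabel | IdLabel | SpdLabel

text \<open>Hidden states are real vectors (lists); messages of layer t take values in
  \<open>\<real>^{d_t}\<close>, modelled as functions \<open>nat \<Rightarrow> real\<close> vanishing from index \<open>d_t\<close> on.\<close>

record mpnn =
  extr   :: extraction
  lab    :: labeling
  layers :: nat
  Msg    :: "nat \<Rightarrow> real list \<Rightarrow> real list \<Rightarrow> real list \<Rightarrow> (nat \<Rightarrow> real)"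
  Upd    :: "nat \<Rightarrow> real list \<Rightarrow> (nat \<Rightarrow> real) \<Rightarrow> real list"
  Readout :: "real list multiset \<Rightarrow> real list"

definition valid_mpnn :: "mpnn \<Rightarrow> bool" where
  "valid_mpnn N \<longleftrightarrow> (\<forall>K. extr N = EgoNet K \<longrightarrow> K \<ge> 1)
     \<and> (\<forall>t < layers N. \<exists>d. \<forall>a b c k. d \<le> k \<longrightarrow> Msg N t a b c k = 0)"

definition subV :: "extraction \<Rightarrow> ('v, 'b) graph_scheme \<Rightarrow> 'v \<Rightarrow> 'v set" where
  "subV ex G i = (case ex of
       NodeDeletion \<Rightarrow> verts G - {i}
     | EgoNet K \<Rightarrow> {j \<in> verts G. spd G i j \<le> enat K})"

definition subAdj :: "extraction \<Rightarrow> ('v, 'b) graph_scheme \<Rightarrow> 'v \<Rightarrow> 'v \<Rightarrow> 'v \<Rightarrow> bool" where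
  "subAdj ex G i j k \<longleftrightarrow> adj G j k \<and> j \<in> subV ex G i \<and> k \<in> subV ex G i"

text \<open>Node labels z_{i,j} as real vectors; an infinite distance (only possible
  under node deletion in a disconnected graph) is encoded as -1.\<close>
definition zlabel :: "labeling \<Rightarrow> ('v, 'b) graph_scheme \<Rightarrow> 'v \<Rightarrow> 'v \<Rightarrow> real list" where
  "zlabel l G i j = (case l of
       NoLabel \<Rightarrow> []
     | IdLabel \<Rightarrow> [if i = j then 1 else 0]
     | SpdLabel \<Rightarrow> [(case spd G i j of enat n \<Rightarrow> real n | \<infinity> \<Rightarrow> -1)])"

fun hidden :: "mpnn \<Rightarrow> ('v, 'b) graph_scheme \<Rightarrow> 'v \<Rightarrow> nat \<Rightarrow> 'v \<Rightarrow> real list" where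
  "hidden N G i 0 j = nattr G j @ zlabel (lab N) G i j"
| "hidden N G i (Suc t) j = Upd N t (hidden N G i t j)
      (\<Sum>k \<in> {k. subAdj (extr N) G i j k}.
          Msg N t (hidden N G i t j) (hidden N G i t k) (eattr G j k))"

definition node_rep :: "mpnn \<Rightarrow> ('v, 'b) graph_scheme \<Rightarrow> 'v \<Rightarrow> real list" where
  "node_rep N G i = Readout N (image_mset (hidden N G i (layers N)) (mset_set (subV (extr N) G i)))"

definition can_count_node_level :: "'v itself \<Rightarrow> substructure \<Rightarrow> bool" where
  "can_count_node_level _ S \<longleftrightarrow>
     (\<forall>(G1 :: 'v graph) (G2 :: 'v graph) i1 i2.
        wf_graph G1 \<longrightarrow> wf_graph G2 \<longrightarrow> i1 \<in> verts G1 \<longrightarrow> i2 \<in> verts G2 \<longrightarrow>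
        count S G1 i1 \<noteq> count S G2 i2 \<longrightarrow>
        (\<exists>N. valid_mpnn N \<and> node_rep N G1 i1 \<noteq> node_rep N G2 i2))"

end

theory Submission
  imports Defs
begin

(* A single Subgraph MPNN computes all four counts: 3-hop ego-networks, identity labels and two
   layers. After the first layer a node j of the ego-network of the root i knows whether it is
   adjacent to i and its degree; after the second it also knows |N(j) \<inter> N(i)| and, when j is
   a neighbour of i, the number of 3-paths i, j, k, l. The counts are then sums of node-wise terms:
   the paths from i are enumerated vertex by vertex, and each cycle through i is seen twice, once
   per direction, which gives
     2 C(3-cycle, i) = \<Sum>_{a \<in> N(i)} |N(a) \<inter> N(i)|,
     2 C(4-cycle, i) = \<Sum>_{b \<noteq> i} |N(b) \<inter> N(i)| (|N(b) \<inter> N(i)| - 1).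
   Since the network outputs the counts themselves, different counts give different node
   representations. *)

section \<open>Walks and ego-networks\<close>

lemma wf_graphD:
  assumes "wf_graph G"
  shows "finite (verts G)" "adj G u v \<Longrightarrow> u \<in> verts G" "adj G u v \<Longrightarrow> v \<in> verts G"
    "adj G u v \<Longrightarrow> adj G v u" "\<not> adj G u u"
  using assms unfolding wf_graph_def by auto

lemma mem_neighbours [simp]: "u \<in> neighbours G v \<longleftrightarrow> adj G v u"
  by (simp add: neighbours_def)

lemma finite_neighbours: "wf_graph G \<Longrightarrow> finite (neighbours G v)"
  by (rule finite_subset[of _ "verts G"]) (auto dest: wf_graphD)

lemma walk_refl: "i \<in> verts G \<Longrightarrow> walk G 0 i i"
  unfolding walk_def by (intro exI[of _ "[i]"]) auto

lemma walk_snoc: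
  assumes "wf_graph G" "walk G n i j" "adj G j k"
  shows "walk G (Suc n) i k"
proof -
  obtain vs where vs: "length vs = n + 1" "hd vs = i" "last vs = j" "set vs \<subseteq> verts G"
      "\<forall>l < n. adj G (vs ! l) (vs ! (l + 1))"
    using assms(2) unfolding walk_def by blast
  have "vs \<noteq> []" using vs(1) by auto
  then have "vs ! n = j" using vs(1,3) by (simp add: last_conv_nth)
  then have "\<forall>l < Suc n. adj G ((vs @ [k]) ! l) ((vs @ [k]) ! (l + 1))"
    using vs(1,5) assms(3) by (auto simp: nth_append less_Suc_eq)
  moreover have "hd (vs @ [k]) = i" "set (vs @ [k]) \<subseteq> verts G"
    using vs(1,2,4) assms(1,3) wf_graphD(3) by (auto simp: hd_append)
  ultimately show ?thesis
    unfolding walk_def using vs(1) by (intro exI[of _ "vs @ [k]"]) auto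
qed

lemma walk_in_ego_net:
  assumes "walk G n i j" "n \<le> K"
  shows "j \<in> subV (EgoNet K) G i"
proof -
  obtain vs where vs: "length vs = n + 1" "last vs = j" "set vs \<subseteq> verts G"
    using assms(1) unfolding walk_def by blast
  then have "vs \<noteq> []" by auto
  then have "j \<in> verts G" using vs(2,3) last_in_set by blast
  moreover have "spd G i j \<le> enat n"
    using assms(1) unfolding spd_def by (auto intro: Least_le)
  ultimately show ?thesis
    using assms(2) unfolding subV_def by (auto intro: order_trans)
qed

section \<open>Short paths and cycles as vertex lists\<close>

lemma length_3_conv: "length vs = 3 \<longleftrightarrow> (\<exists>a b c. vs = [a, b, c])"
  by (auto simp: numeral_eq_Suc length_Suc_conv)

lemma length_4_conv: "length vs = 4 \<longleftrightarrow> (\<exists>a b c d. vs = [a, b, c, d])"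
  by (auto simp: numeral_eq_Suc length_Suc_conv)

lemma all_less_3: "(\<forall>k<3::nat. P k) \<longleftrightarrow> P 0 \<and> P 1 \<and> P 2"
  by (auto simp: numeral_3_eq_3 numeral_2_eq_2 less_Suc_eq)

lemma all_less_4: "(\<forall>k<4::nat. P k) \<longleftrightarrow> P 0 \<and> P 1 \<and> P 2 \<and> P 3"
  by (auto simp: numeral_eq_Suc less_Suc_eq)

lemma is_path_2: "is_path G 2 [a, b, c] \<longleftrightarrow> distinct [a, b, c] \<and> adj G a b \<and> adj G b c"
  by (auto simp: is_path_def numeral_eq_Suc All_less_Suc)

lemma is_path_3:
  "is_path G 3 [a, b, c, d] \<longleftrightarrow> distinct [a, b, c, d] \<and> adj G a b \<and> adj G b c \<and> adj G c d"
  by (auto simp: is_path_def all_less_3)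

lemma is_cycle_3:
  "is_cycle G 3 [a, b, c] \<longleftrightarrow> distinct [a, b, c] \<and> adj G a b \<and> adj G b c \<and> adj G c a"
  by (auto simp: is_cycle_def all_less_3)

lemma is_cycle_4:
  "is_cycle G 4 [a, b, c, d] \<longleftrightarrow>
    distinct [a, b, c, d] \<and> adj G a b \<and> adj G b c \<and> adj G c d \<and> adj G d a"
  by (auto simp: is_cycle_def all_less_4)

lemma path_edges_2: "path_edges 2 [a, b, c] = {{a, b}, {b, c}}"
  by (simp add: path_edges_def numeral_eq_Suc lessThan_Suc insert_commute)

lemma path_edges_3: "path_edges 3 [a, b, c, d] = {{a, b}, {b, c}, {c, d}}"
  by (simp add: path_edges_def numeral_eq_Suc lessThan_Suc insert_commute)

lemma cycle_edges_3: "cycle_edges 3 [a, b, c] = {{a, b}, {b, c}, {c, a}}"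
proof -
  have "{..<3::nat} = {0, 1, 2}" by auto
  then show ?thesis by (simp add: cycle_edges_def)
qed

lemma cycle_edges_4: "cycle_edges 4 [a, b, c, d] = {{a, b}, {b, c}, {c, d}, {d, a}}"
proof -
  have "{..<4::nat} = {0, 1, 2, 3}" by auto
  then show ?thesis by (simp add: cycle_edges_def)
qed

lemma path_edges_2_eq_iff:
  assumes "distinct [i, a, b]" "distinct [i, a', b']"
  shows "path_edges 2 [i, a, b] = path_edges 2 [i, a', b'] \<longleftrightarrow> (a', b') = (a, b)"
proof
  assume "path_edges 2 [i, a, b] = path_edges 2 [i, a', b']"
  then have E: "{{i, a}, {a, b}} = {{i, a'}, {a', b'}}" by (simp add: path_edges_2)
  have "{i, a} \<in> {{i, a'}, {a', b'}}" unfolding E[symmetric] by simp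
  then have "a' = a" using assms by (auto simp: doubleton_eq_iff)
  moreover have "{a, b} \<in> {{i, a'}, {a', b'}}" unfolding E[symmetric] by simp
  ultimately show "(a', b') = (a, b)" using assms by (auto simp: doubleton_eq_iff)
qed simp

lemma path_edges_3_eq_iff:
  assumes "distinct [i, a, b, c]" "distinct [i, a', b', c']"
  shows "path_edges 3 [i, a, b, c] = path_edges 3 [i, a', b', c'] \<longleftrightarrow> (a', b', c') = (a, b, c)"
proof
  assume "path_edges 3 [i, a, b, c] = path_edges 3 [i, a', b', c']"
  then have E: "{{i, a}, {a, b}, {b, c}} = {{i, a'}, {a', b'}, {b', c'}}" by (simp add: path_edges_3)
  have "{i, a} \<in> {{i, a'}, {a', b'}, {b', c'}}" unfolding E[symmetric] by simp
  then have "a' = a" using assms by (auto simp: doubleton_eq_iff)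
  moreover have "{a, b} \<in> {{i, a'}, {a', b'}, {b', c'}}" unfolding E[symmetric] by simp
  ultimately have "b' = b" using assms by (auto simp: doubleton_eq_iff)
  moreover have "{b, c} \<in> {{i, a'}, {a', b'}, {b', c'}}" unfolding E[symmetric] by simp
  ultimately show "(a', b', c') = (a, b, c)" using assms \<open>a' = a\<close> by (auto simp: doubleton_eq_iff)
qed simp

lemma cycle_edges_3_eq_iff:
  assumes "distinct [i, a, b]" "distinct [i, a', b']"
  shows "cycle_edges 3 [i, a, b] = cycle_edges 3 [i, a', b'] \<longleftrightarrow> (a', b') = (a, b) \<or> (a', b') = (b, a)"
proof
  assume "cycle_edges 3 [i, a, b] = cycle_edges 3 [i, a', b']"
  then have "\<Union> (cycle_edges 3 [i, a, b]) - {i} = \<Union> (cycle_edges 3 [i, a', b']) - {i}" by simp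
  then have "{a, b} = {a', b'}" using assms by (auto simp: cycle_edges_3)
  then show "(a', b') = (a, b) \<or> (a', b') = (b, a)" by (auto simp: doubleton_eq_iff)
qed (auto simp: cycle_edges_3 insert_commute)

lemma cycle_edges_4_eq_iff:
  assumes "distinct [i, a, b, c]" "distinct [i, a', b', c']"
  shows "cycle_edges 4 [i, a, b, c] = cycle_edges 4 [i, a', b', c'] \<longleftrightarrow>
    (a', b', c') = (a, b, c) \<or> (a', b', c') = (c, b, a)"
proof
  assume E: "cycle_edges 4 [i, a, b, c] = cycle_edges 4 [i, a', b', c']"
  have nbrs: "{x. {i, x} \<in> cycle_edges 4 [i, u, v, w]} = {u, w}" if "distinct [i, u, v, w]" for u v w
    using that by (auto simp: cycle_edges_4 doubleton_eq_iff)
  have opposite: "\<Union> (cycle_edges 4 [i, u, v, w]) - {i, u, w} = {v}" if "distinct [i, u, v, w]" for u v w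
    using that by (auto simp: cycle_edges_4)
  have "{a, c} = {a', c'}" using nbrs[OF assms(1)] nbrs[OF assms(2)] E by simp
  moreover then have "b' = b" using opposite[OF assms(1)] opposite[OF assms(2)] E by simp
  ultimately show "(a', b', c') = (a, b, c) \<or> (a', b', c') = (c, b, a)" by (auto simp: doubleton_eq_iff)
qed (auto simp: cycle_edges_4 insert_commute)

section \<open>Counting paths and cycles at a root\<close>

lemma is_cycle_rotate:
  assumes "is_cycle G L vs"
  shows "is_cycle G L (rotate m vs)"
proof -
  have L: "length vs = L" "L > 0" using assms unfolding is_cycle_def by auto
  have "adj G (rotate m vs ! k) (rotate m vs ! ((k + 1) mod L))" if "k < L" for k
  proof -
    have "adj G (vs ! ((m + k) mod L)) (vs ! (((m + k) mod L + 1) mod L))"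
      using assms L(2) unfolding is_cycle_def by simp
    then show ?thesis using L that by (simp add: nth_rotate mod_add_right_eq mod_Suc_eq)
  qed
  then show ?thesis using assms unfolding is_cycle_def by simp
qed

lemma cycle_edges_rotate:
  assumes "length vs = L"
  shows "cycle_edges L (rotate m vs) = cycle_edges L vs"
proof (cases "L = 0")
  case False
  have shift: "(\<lambda>k. (m + k) mod L) ` {..<L} = {..<L}"
  proof (intro equalityI subsetI)
    fix j assume "j \<in> {..<L}"
    have "m + (j + L - m mod L) = j + L + m div L * L"
      using div_mult_mod_eq[of m L] mod_less_divisor[of L m] False by linarith
    then have "j = (m + (j + L - m mod L) mod L) mod L"
      using \<open>j \<in> {..<L}\<close> by (simp add: mod_add_right_eq)
    then show "j \<in> (\<lambda>k. (m + k) mod L) ` {..<L}" using False by auto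
  qed (use False in auto)
  have "cycle_edges L (rotate m vs) = (\<lambda>j. {vs ! j, vs ! ((j + 1) mod L)}) ` (\<lambda>k. (m + k) mod L) ` {..<L}"
    unfolding cycle_edges_def image_image using assms False
    by (intro image_cong refl) (simp add: nth_rotate mod_add_right_eq mod_Suc_eq)
  then show ?thesis unfolding shift cycle_edges_def .
qed (use assms in \<open>simp add: cycle_edges_def\<close>)

lemma cycle_edge_sets_through:
  "{cycle_edges L vs | vs. is_cycle G L vs \<and> i \<in> set vs} = cycle_edges L ` {vs. is_cycle G L vs \<and> hd vs = i}"
proof (intro equalityI subsetI)
  fix E assume "E \<in> {cycle_edges L vs | vs. is_cycle G L vs \<and> i \<in> set vs}"
  then obtain vs where vs: "E = cycle_edges L vs" "is_cycle G L vs" "i \<in> set vs" by blast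
  then obtain p where p: "p < L" "vs ! p = i"
    unfolding is_cycle_def by (auto simp: in_set_conv_nth)
  have "vs \<noteq> []" using vs(3) by auto
  then have "hd (rotate p vs) = i"
    using vs(2) p by (simp add: hd_rotate_conv_nth is_cycle_def)
  moreover have "E = cycle_edges L (rotate p vs)"
    using vs(1,2) unfolding is_cycle_def by (simp add: cycle_edges_rotate)
  ultimately show "E \<in> cycle_edges L ` {vs. is_cycle G L vs \<and> hd vs = i}"
    using is_cycle_rotate[OF vs(2)] by blast
next
  fix E assume "E \<in> cycle_edges L ` {vs. is_cycle G L vs \<and> hd vs = i}"
  then obtain vs where vs: "E = cycle_edges L vs" "is_cycle G L vs" "hd vs = i" by blast
  then have "i \<in> set vs" unfolding is_cycle_def by (auto intro: hd_in_set)
  then show "E \<in> {cycle_edges L vs | vs. is_cycle G L vs \<and> i \<in> set vs}" using vs by blast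
qed

lemma paths_2_from_eq:
  assumes "wf_graph G"
  shows "{vs. is_path G 2 vs \<and> hd vs = i} =
    (\<lambda>(a, b). [i, a, b]) ` (SIGMA a:neighbours G i. neighbours G a - {i})" (is "?P = ?f ` ?D")
proof (intro equalityI subsetI)
  fix vs assume vs: "vs \<in> ?P"
  then have "length vs = 3" by (simp add: is_path_def)
  then obtain a b c where "vs = [a, b, c]" unfolding length_3_conv by blast
  then show "vs \<in> ?f ` ?D" using vs by (force simp: is_path_2)
qed (auto simp: is_path_2 wf_graphD(5)[OF assms])

lemma paths_3_from_eq:
  assumes "wf_graph G"
  shows "{vs. is_path G 3 vs \<and> hd vs = i} = (\<lambda>(a, b, c). [i, a, b, c]) `
    (SIGMA a:neighbours G i. SIGMA b:neighbours G a - {i}. neighbours G b - {a, i})"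
  (is "?P = ?f ` ?D")
proof (intro equalityI subsetI)
  fix vs assume vs: "vs \<in> ?P"
  then have "length vs = 4" by (simp add: is_path_def)
  then obtain a b c d where "vs = [a, b, c, d]" unfolding length_4_conv by blast
  then show "vs \<in> ?f ` ?D" using vs by (force simp: is_path_3)
qed (auto simp: is_path_3 wf_graphD(5)[OF assms])

lemma cycles_3_from_eq:
  assumes "wf_graph G"
  shows "{vs. is_cycle G 3 vs \<and> hd vs = i} = (\<lambda>(a, b). [i, a, b]) `
    (SIGMA a:neighbours G i. neighbours G a \<inter> neighbours G i)" (is "?C = ?f ` ?D")
proof (intro equalityI subsetI)
  fix vs assume vs: "vs \<in> ?C"
  then have "length vs = 3" by (simp add: is_cycle_def)
  then obtain a b where "vs = [i, a, b]" "is_cycle G 3 [i, a, b]"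
    using vs unfolding length_3_conv by auto
  moreover then have "adj G i b" using wf_graphD(4)[OF assms] by (simp add: is_cycle_3)
  ultimately show "vs \<in> ?f ` ?D" by (force simp: is_cycle_3)
next
  fix vs assume "vs \<in> ?f ` ?D"
  then obtain a b where "vs = [i, a, b]" "adj G i a" "adj G a b" "adj G i b" by auto
  moreover then have "adj G b i" using wf_graphD(4)[OF assms] by blast
  ultimately show "vs \<in> ?C"
    by (auto simp: is_cycle_3 wf_graphD(5)[OF assms])
qed

lemma cycles_4_from_eq:
  assumes "wf_graph G"
  shows "{vs. is_cycle G 4 vs \<and> hd vs = i} = (\<lambda>(b, a, c). [i, a, b, c]) `
    (SIGMA b:verts G - {i}. SIGMA a:neighbours G b \<inter> neighbours G i.
      neighbours G b \<inter> neighbours G i - {a})" (is "?C = ?f ` ?D")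
proof (intro equalityI subsetI)
  fix vs assume vs: "vs \<in> ?C"
  then have "length vs = 4" by (simp add: is_cycle_def)
  then obtain a b c where "vs = [i, a, b, c]" "is_cycle G 4 [i, a, b, c]"
    using vs unfolding length_4_conv by auto
  moreover then have "adj G b a" "adj G i c" "b \<in> verts G"
    using wf_graphD(2,4)[OF assms] by (auto simp: is_cycle_4)
  ultimately show "vs \<in> ?f ` ?D" by (force simp: is_cycle_4)
next
  fix vs assume "vs \<in> ?f ` ?D"
  then obtain a b c where "vs = [i, a, b, c]" "b \<noteq> i" "c \<noteq> a"
      "adj G b a" "adj G i a" "adj G b c" "adj G i c" by force
  moreover then have "adj G a b" "adj G c i" using wf_graphD(4)[OF assms] by blast+
  ultimately show "vs \<in> ?C"
    by (auto simp: is_cycle_4 wf_graphD(5)[OF assms])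
qed

lemma inj_on_path_edges_2: "inj_on (path_edges 2) {vs. is_path G 2 vs \<and> hd vs = i}"
proof (rule inj_onI)
  fix vs ws assume vs: "vs \<in> {vs. is_path G 2 vs \<and> hd vs = i}"
    and ws: "ws \<in> {vs. is_path G 2 vs \<and> hd vs = i}" and E: "path_edges 2 vs = path_edges 2 ws"
  have "length vs = 3" "length ws = 3" using vs ws by (simp_all add: is_path_def)
  then obtain a b a' b' where "vs = [i, a, b]" "ws = [i, a', b']"
    using vs ws unfolding length_3_conv by auto
  with vs ws E show "vs = ws" by (simp add: path_edges_2_eq_iff is_path_def)
qed

lemma inj_on_path_edges_3: "inj_on (path_edges 3) {vs. is_path G 3 vs \<and> hd vs = i}"
proof (rule inj_onI)
  fix vs ws assume vs: "vs \<in> {vs. is_path G 3 vs \<and> hd vs = i}"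
    and ws: "ws \<in> {vs. is_path G 3 vs \<and> hd vs = i}" and E: "path_edges 3 vs = path_edges 3 ws"
  have "length vs = 4" "length ws = 4" using vs ws by (simp_all add: is_path_def)
  then obtain a b c a' b' c' where "vs = [i, a, b, c]" "ws = [i, a', b', c']"
    using vs ws unfolding length_4_conv by auto
  with vs ws E show "vs = ws" by (simp add: path_edges_3_eq_iff is_path_def)
qed

lemma card_eq_twice_card_image:
  assumes "finite A"
    and "\<And>x. x \<in> A \<Longrightarrow> \<sigma> x \<in> A" "\<And>x. x \<in> A \<Longrightarrow> \<sigma> x \<noteq> x"
    and "\<And>x y. x \<in> A \<Longrightarrow> y \<in> A \<Longrightarrow> f y = f x \<longleftrightarrow> y = x \<or> y = \<sigma> x"
  shows "card A = 2 * card (f ` A)"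
proof -
  have fibre: "card {y \<in> A. f y = f x} = 2" if "x \<in> A" for x
  proof -
    have "{y \<in> A. f y = f x} = {x, \<sigma> x}" using assms(2,4) that by auto
    then show ?thesis using assms(3)[OF that] by simp
  qed
  have "card A = (\<Sum>e\<in>f ` A. card {y \<in> A. f y = e})"
    using sum.group[OF assms(1) finite_imageI[OF assms(1)] subset_refl, where g = f and h = "\<lambda>_. 1::nat"]
    by simp
  also have "\<dots> = (\<Sum>e\<in>f ` A. 2)" using fibre by (intro sum.cong) auto
  finally show ?thesis by simp
qed

lemma card_off_diagonal: "finite X \<Longrightarrow> card (SIGMA a:X. X - {a}) = card X * (card X - 1)"
  by (simp add: card_SigmaI)

lemma count_path_2:
  assumes "wf_graph G"
  shows "count (Path 2) G i = (\<Sum>a\<in>neighbours G i. card (neighbours G a - {i}))"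
proof -
  have "count (Path 2) G i = card {vs. is_path G 2 vs \<and> hd vs = i}"
    by (simp add: image_Collect[symmetric] card_image[OF inj_on_path_edges_2])
  also have "\<dots> = card (SIGMA a:neighbours G i. neighbours G a - {i})"
    unfolding paths_2_from_eq[OF assms] by (rule card_image) (auto intro: inj_onI)
  finally show ?thesis using finite_neighbours[OF assms] by simp
qed

lemma count_path_3:
  assumes "wf_graph G"
  shows "count (Path 3) G i =
    (\<Sum>a\<in>neighbours G i. \<Sum>b\<in>neighbours G a - {i}. card (neighbours G b - {a, i}))"
proof -
  have "count (Path 3) G i = card {vs. is_path G 3 vs \<and> hd vs = i}"
    by (simp add: image_Collect[symmetric] card_image[OF inj_on_path_edges_3])
  also have "\<dots> = card (SIGMA a:neighbours G i. SIGMA b:neighbours G a - {i}. neighbours G b - {a, i})"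
    unfolding paths_3_from_eq[OF assms] by (rule card_image) (auto intro: inj_onI)
  finally show ?thesis using finite_neighbours[OF assms] by simp
qed

(* Each cycle through i is represented by exactly two vertex lists starting at i, one per
   direction of traversal. *)
lemma count_cycle_3:
  assumes "wf_graph G"
  shows "2 * count (Cycle 3) G i = (\<Sum>a\<in>neighbours G i. card (neighbours G a \<inter> neighbours G i))"
proof -
  let ?C = "{vs. is_cycle G 3 vs \<and> hd vs = i}"
  let ?D = "SIGMA a:neighbours G i. neighbours G a \<inter> neighbours G i"
  have C: "?C = (\<lambda>(a, b). [i, a, b]) ` ?D" by (rule cycles_3_from_eq[OF assms])
  have "card ?C = 2 * count (Cycle 3) G i"
    unfolding count.simps cycle_edge_sets_through
  proof (rule card_eq_twice_card_image[where \<sigma> = "\<lambda>vs. hd vs # rev (tl vs)"])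
    show "finite ?C" unfolding C using finite_neighbours[OF assms] by auto
  next
    fix vs assume "vs \<in> ?C"
    then obtain a b where "vs = [i, a, b]" "adj G i a" "adj G a b" "adj G i b" unfolding C by auto
    then show "hd vs # rev (tl vs) \<in> ?C" "hd vs # rev (tl vs) \<noteq> vs"
      unfolding C using wf_graphD(4,5)[OF assms] by (auto intro: rev_image_eqI)
  next
    fix vs ws assume "vs \<in> ?C" "ws \<in> ?C"
    then have "distinct vs" "distinct ws" "length vs = 3" "length ws = 3" "hd vs = i" "hd ws = i"
      by (simp_all add: is_cycle_def)
    then obtain a b a' b' where "vs = [i, a, b]" "ws = [i, a', b']" "distinct [i, a, b]" "distinct [i, a', b']"
      unfolding length_3_conv by auto
    then show "cycle_edges 3 ws = cycle_edges 3 vs \<longleftrightarrow> ws = vs \<or> ws = hd vs # rev (tl vs)"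
      by (auto simp: cycle_edges_3_eq_iff)
  qed
  also have "card ?C = card ?D" unfolding C by (rule card_image) (auto intro: inj_onI)
  finally show ?thesis using finite_neighbours[OF assms] by simp
qed

lemma count_cycle_4:
  assumes "wf_graph G"
  shows "2 * count (Cycle 4) G i = (\<Sum>b\<in>verts G - {i}.
    card (neighbours G b \<inter> neighbours G i) * (card (neighbours G b \<inter> neighbours G i) - 1))"
proof -
  let ?C = "{vs. is_cycle G 4 vs \<and> hd vs = i}"
  let ?D = "SIGMA b:verts G - {i}. SIGMA a:neighbours G b \<inter> neighbours G i.
    neighbours G b \<inter> neighbours G i - {a}"
  have C: "?C = (\<lambda>(b, a, c). [i, a, b, c]) ` ?D" by (rule cycles_4_from_eq[OF assms])
  have "card ?C = 2 * count (Cycle 4) G i"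
    unfolding count.simps cycle_edge_sets_through
  proof (rule card_eq_twice_card_image[where \<sigma> = "\<lambda>vs. hd vs # rev (tl vs)"])
    show "finite ?C" unfolding C using finite_neighbours[OF assms] wf_graphD(1)[OF assms] by auto
  next
    fix vs assume "vs \<in> ?C"
    then obtain a b c where "vs = [i, a, b, c]" "b \<in> verts G" "b \<noteq> i" "c \<noteq> a"
        "adj G b a" "adj G i a" "adj G b c" "adj G i c"
      unfolding C by force
    then show "hd vs # rev (tl vs) \<in> ?C" "hd vs # rev (tl vs) \<noteq> vs"
      unfolding C by (auto intro: rev_image_eqI[of "(b, c, a)"])
  next
    fix vs ws assume "vs \<in> ?C" "ws \<in> ?C"
    then have "distinct vs" "distinct ws" "length vs = 4" "length ws = 4" "hd vs = i" "hd ws = i"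
      by (simp_all add: is_cycle_def)
    then obtain a b c a' b' c' where "vs = [i, a, b, c]" "ws = [i, a', b', c']"
      "distinct [i, a, b, c]" "distinct [i, a', b', c']"
      unfolding length_4_conv by auto
    then show "cycle_edges 4 ws = cycle_edges 4 vs \<longleftrightarrow> ws = vs \<or> ws = hd vs # rev (tl vs)"
      by (auto simp: cycle_edges_4_eq_iff)
  qed
  also have "card ?C = card ?D" unfolding C by (rule card_image) (auto intro: inj_onI)
  finally show ?thesis
    using finite_neighbours[OF assms] wf_graphD(1)[OF assms] by (simp add: card_off_diagonal)
qed

lemma real_card_Diff_singleton:
  assumes "finite A"
  shows "real (card (A - {x})) = real (card A) - of_bool (x \<in> A)"
proof (cases "x \<in> A")
  case True
  have "real (card A) = real (card (A - {x})) + 1"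
    using card_Suc_Diff1[OF assms True] by (metis of_nat_Suc add.commute)
  moreover have "of_bool (x \<in> A) = (1::real)" using True by simp
  ultimately show ?thesis by linarith
qed simp

lemma real_mult_pred: "real (n * (n - 1)) = real n * (real n - 1)"
  by (cases n) (auto simp: algebra_simps)

lemma card_neighbours_Diff_doubleton:
  assumes "wf_graph G" "adj G a b" "a \<noteq> i"
  shows "real (card (neighbours G b - {a, i})) = real (card (neighbours G b)) - 1 - of_bool (adj G i b)"
proof -
  have "neighbours G b - {a, i} = neighbours G b - {a} - {i}" by auto
  moreover have "i \<in> neighbours G b - {a} \<longleftrightarrow> adj G i b"
    using assms(3) wf_graphD(4)[OF assms(1)] by auto
  ultimately show ?thesis
    using wf_graphD(4)[OF assms(1,2)] finite_neighbours[OF assms(1)]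
    by (simp add: real_card_Diff_singleton del: card_Diff_insert)
qed

section \<open>A Subgraph MPNN computing the four counts\<close>

definition vec2 :: "real \<Rightarrow> real \<Rightarrow> nat \<Rightarrow> real" where
  "vec2 x y = (\<lambda>n. if n = 0 then x else if n = 1 then y else 0)"

lemma vec2_simps [simp]: "vec2 x y 0 = x" "vec2 x y (Suc 0) = y"
  by (simp_all add: vec2_def)

lemma sum_vec2: "(\<Sum>k\<in>A. vec2 (f k) (g k)) = vec2 (\<Sum>k\<in>A. f k) (\<Sum>k\<in>A. g k)"
  by (induction A rule: infinite_finite_induct) (auto simp: vec2_def fun_eq_iff)

(* In the second layer, k sends to j the value (1 - [k = i]) (deg k - 1 - [k adjacent to i]), which
   for a neighbour k \<noteq> i of j is |N(k) - {j, i}|: the number of ways to extend a path i, j, k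
   by one edge. *)
definition counting_msg :: "nat \<Rightarrow> real list \<Rightarrow> real list \<Rightarrow> real list \<Rightarrow> nat \<Rightarrow> real" where
  "counting_msg t h\<^sub>j h\<^sub>k e = (if t = 0 then vec2 (last h\<^sub>k) 1
     else vec2 (h\<^sub>k ! 1) ((1 - h\<^sub>k ! 0) * (h\<^sub>k ! 2 - 1 - h\<^sub>k ! 1)))"

definition counting_upd :: "nat \<Rightarrow> real list \<Rightarrow> (nat \<Rightarrow> real) \<Rightarrow> real list" where
  "counting_upd t h m = (if t = 0 then [last h] else h) @ [m 0, m 1]"

definition counting_shares :: "(real list \<Rightarrow> real) list" where
  "counting_shares =
     [\<lambda>h. h ! 1 * (h ! 3 / 2), \<lambda>h. (1 - h ! 0) * (h ! 3 * (h ! 3 - 1) / 2),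
      \<lambda>h. h ! 1 * (h ! 2 - 1), \<lambda>h. h ! 1 * h ! 4]"

definition counting_readout :: "real list multiset \<Rightarrow> real list" where
  "counting_readout M = map (\<lambda>f. \<Sum>\<^sub># (image_mset f M)) counting_shares"

definition counting_net :: mpnn where
  "counting_net = \<lparr>extr = EgoNet 3, lab = IdLabel, layers = 2,
     Msg = counting_msg, Upd = counting_upd, Readout = counting_readout\<rparr>"

lemma valid_counting_net: "valid_mpnn counting_net"
  unfolding valid_mpnn_def counting_net_def
  by (auto simp: counting_msg_def vec2_def intro: exI[of _ 2])

abbreviation ego_nbrs :: "('v, 'b) graph_scheme \<Rightarrow> 'v \<Rightarrow> 'v \<Rightarrow> 'v set" where
  "ego_nbrs G i j \<equiv> {k. subAdj (EgoNet 3) G i j k}"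

lemma hidden_counting_net:
  "hidden counting_net G i 2 j =
    [of_bool (i = j), (\<Sum>k\<in>ego_nbrs G i j. of_bool (i = k)), real (card (ego_nbrs G i j)),
     (\<Sum>k\<in>ego_nbrs G i j. \<Sum>l\<in>ego_nbrs G i k. of_bool (i = l)),
     (\<Sum>k\<in>ego_nbrs G i j. (1 - of_bool (i = k))
        * (real (card (ego_nbrs G i k)) - 1 - (\<Sum>l\<in>ego_nbrs G i k. of_bool (i = l))))]"
  by (simp add: numeral_2_eq_2 counting_net_def counting_msg_def counting_upd_def zlabel_def
      of_bool_def sum_vec2)

lemma node_rep_counting_net:
  "node_rep counting_net G i =
    map (\<lambda>f. \<Sum>j\<in>subV (EgoNet 3) G i. f (hidden counting_net G i 2 j)) counting_shares"
  by (simp add: node_rep_def counting_net_def counting_readout_def sum_unfold_sum_mset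
      multiset.map_comp comp_def)

context
  fixes G :: "('v, 'b) graph_scheme" and i :: 'v
  assumes wf: "wf_graph G" and root: "i \<in> verts G"
begin

abbreviation ego :: "'v set" where
  "ego \<equiv> subV (EgoNet 3) G i"

abbreviation state :: "'v \<Rightarrow> real list" where
  "state j \<equiv> hidden counting_net G i 2 j"

lemma ego_net_members:
  shows "i \<in> ego"
    and "adj G i a \<Longrightarrow> a \<in> ego"
    and "adj G i a \<Longrightarrow> adj G a b \<Longrightarrow> b \<in> ego"
    and "adj G i a \<Longrightarrow> adj G a b \<Longrightarrow> adj G b c \<Longrightarrow> c \<in> ego"
proof -
  have w0: "walk G 0 i i" by (rule walk_refl[OF root])
  show "i \<in> ego" using walk_in_ego_net[OF w0] by simp
  show "a \<in> ego" if "adj G i a"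
    using walk_in_ego_net[OF walk_snoc[OF wf w0 that]] by simp
  show "b \<in> ego" if "adj G i a" "adj G a b"
    using walk_in_ego_net[OF walk_snoc[OF wf walk_snoc[OF wf w0 that(1)] that(2)]] by simp
  show "c \<in> ego" if "adj G i a" "adj G a b" "adj G b c"
    using walk_in_ego_net[OF walk_snoc[OF wf walk_snoc[OF wf walk_snoc[OF wf w0 that(1)] that(2)] that(3)]]
    by simp
qed

lemma finite_ego_net: "finite ego"
  using wf_graphD(1)[OF wf] by (rule finite_subset[rotated]) (auto simp: subV_def)

lemma finite_ego_nbrs: "finite (ego_nbrs G i j)"
  using finite_ego_net by (rule finite_subset[rotated]) (auto simp: subAdj_def)

lemma ego_nbrs_eq: "j \<in> ego \<Longrightarrow> ego_nbrs G i j = neighbours G j \<inter> ego"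
  by (auto simp: subAdj_def)

lemma ego_nbrs_within_distance_2:
  shows "adj G i a \<Longrightarrow> ego_nbrs G i a = neighbours G a"
    and "adj G i a \<Longrightarrow> adj G a b \<Longrightarrow> ego_nbrs G i b = neighbours G b"
  using ego_net_members ego_nbrs_eq wf_graphD(4)[OF wf] by auto

lemma sum_ego_nbrs_root:
  "j \<in> ego \<Longrightarrow> (\<Sum>k\<in>ego_nbrs G i j. of_bool (i = k)) = (of_bool (adj G i j) :: real)"
proof -
  assume j: "j \<in> ego"
  have "ego_nbrs G i j \<inter> {k. i = k} = (if adj G i j then {i} else {})"
    using j ego_net_members(1) wf_graphD(4)[OF wf] by (auto simp: ego_nbrs_eq)
  then show ?thesis by (simp add: finite_ego_nbrs)
qed

lemma counting_net_state:
  assumes "j \<in> ego"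
  shows "state j = [of_bool (i = j), of_bool (adj G i j), real (card (ego_nbrs G i j)),
    real (card (neighbours G j \<inter> neighbours G i)),
    (\<Sum>k\<in>ego_nbrs G i j. (1 - of_bool (i = k)) * (real (card (ego_nbrs G i k)) - 1 - of_bool (adj G i k)))]"
proof -
  have root_count: "(\<Sum>l\<in>ego_nbrs G i k. of_bool (i = l)) = (of_bool (adj G i k) :: real)"
    if "k \<in> ego_nbrs G i j" for k
    using that by (intro sum_ego_nbrs_root) (simp add: subAdj_def)
  have common_neighbours: "(\<Sum>k\<in>ego_nbrs G i j. \<Sum>l\<in>ego_nbrs G i k. of_bool (i = l))
      = real (card (neighbours G j \<inter> neighbours G i))"
  proof -
    have "ego_nbrs G i j \<inter> {k. adj G i k} = neighbours G j \<inter> neighbours G i"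
      using assms ego_net_members(2) by (auto simp: ego_nbrs_eq)
    moreover have "(\<Sum>k\<in>ego_nbrs G i j. \<Sum>l\<in>ego_nbrs G i k. of_bool (i = l))
        = (\<Sum>k\<in>ego_nbrs G i j. (of_bool (adj G i k) :: real))"
      by (rule sum.cong[OF refl root_count])
    ultimately show ?thesis by (simp add: finite_ego_nbrs)
  qed
  have two_hop_terms: "(\<Sum>k\<in>ego_nbrs G i j. (1 - of_bool (i = k))
        * (real (card (ego_nbrs G i k)) - 1 - (\<Sum>l\<in>ego_nbrs G i k. of_bool (i = l))))
      = (\<Sum>k\<in>ego_nbrs G i j. (1 - of_bool (i = k)) * (real (card (ego_nbrs G i k)) - 1 - of_bool (adj G i k)))"
    by (intro sum.cong refl) (simp only: root_count)
  show ?thesis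
    unfolding hidden_counting_net sum_ego_nbrs_root[OF assms] common_neighbours two_hop_terms ..
qed

lemma common_neighbours_outside_ego:
  assumes "b \<notin> ego"
  shows "neighbours G b \<inter> neighbours G i = {}"
proof (rule ccontr)
  assume "neighbours G b \<inter> neighbours G i \<noteq> {}"
  then obtain a where "adj G i a" "adj G b a" by auto
  then show False using assms ego_net_members(3) wf_graphD(4)[OF wf] by blast
qed

lemma sum_ego_root_neighbours:
  fixes f :: "'v \<Rightarrow> real"
  shows "(\<Sum>j\<in>ego. of_bool (adj G i j) * f j) = (\<Sum>a\<in>neighbours G i. f a)"
proof -
  have "ego \<inter> {j. adj G i j} = neighbours G i" using ego_net_members(2) by auto
  then show ?thesis by (simp add: finite_ego_net)
qed

lemma readout_cycle_3: "(\<Sum>j\<in>ego. state j ! 1 * (state j ! 3 / 2)) = real (count (Cycle 3) G i)"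
proof -
  have "(\<Sum>j\<in>ego. state j ! 1 * (state j ! 3 / 2))
      = (\<Sum>j\<in>ego. of_bool (adj G i j) * (real (card (neighbours G j \<inter> neighbours G i)) / 2))"
    by (rule sum.cong) (simp_all add: counting_net_state)
  also have "\<dots> = (\<Sum>a\<in>neighbours G i. real (card (neighbours G a \<inter> neighbours G i)) / 2)"
    by (rule sum_ego_root_neighbours)
  also have "\<dots> = real (2 * count (Cycle 3) G i) / 2"
    unfolding count_cycle_3[OF wf] by (simp add: sum_divide_distrib)
  finally show ?thesis by simp
qed

lemma readout_path_2: "(\<Sum>j\<in>ego. state j ! 1 * (state j ! 2 - 1)) = real (count (Path 2) G i)"
proof -
  have "(\<Sum>j\<in>ego. state j ! 1 * (state j ! 2 - 1))
      = (\<Sum>j\<in>ego. of_bool (adj G i j) * (real (card (ego_nbrs G i j)) - 1))"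
    by (rule sum.cong) (simp_all add: counting_net_state)
  also have "\<dots> = (\<Sum>a\<in>neighbours G i. real (card (ego_nbrs G i a)) - 1)"
    by (rule sum_ego_root_neighbours)
  also have "\<dots> = (\<Sum>a\<in>neighbours G i. real (card (neighbours G a - {i})))"
    using wf_graphD(4)[OF wf]
    by (intro sum.cong) (simp_all add: ego_nbrs_within_distance_2 real_card_Diff_singleton
        finite_neighbours[OF wf] del: card_Diff_insert)
  also have "\<dots> = real (count (Path 2) G i)"
    unfolding count_path_2[OF wf] by simp
  finally show ?thesis .
qed

lemma readout_path_3: "(\<Sum>j\<in>ego. state j ! 1 * state j ! 4) = real (count (Path 3) G i)"
proof -
  have "(\<Sum>j\<in>ego. state j ! 1 * state j ! 4) = (\<Sum>j\<in>ego. of_bool (adj G i j) * state j ! 4)"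
    by (rule sum.cong) (simp_all add: counting_net_state)
  also have "\<dots> = (\<Sum>a\<in>neighbours G i. state a ! 4)"
    by (rule sum_ego_root_neighbours)
  also have "\<dots> = (\<Sum>a\<in>neighbours G i. \<Sum>b\<in>neighbours G a - {i}. real (card (neighbours G b - {a, i})))"
  proof (rule sum.cong)
    fix a assume "a \<in> neighbours G i"
    then have a: "adj G i a" "a \<in> ego" "a \<noteq> i"
      using ego_net_members(2) wf_graphD(5)[OF wf] by auto
    have "state a ! 4 = (\<Sum>b\<in>neighbours G a. (1 - of_bool (i = b))
        * (real (card (ego_nbrs G i b)) - 1 - of_bool (adj G i b)))"
      using a by (simp add: counting_net_state ego_nbrs_within_distance_2(1))
    also have "\<dots> = (\<Sum>b\<in>neighbours G a. of_bool (b \<noteq> i) * real (card (neighbours G b - {a, i})))"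
      using a by (intro sum.cong refl)
        (auto simp: ego_nbrs_within_distance_2(2) card_neighbours_Diff_doubleton[OF wf])
    also have "\<dots> = (\<Sum>b\<in>neighbours G a \<inter> {b. b \<noteq> i}. real (card (neighbours G b - {a, i})))"
      by (rule sum_of_bool_mult_eq[OF finite_neighbours[OF wf]])
    also have "\<dots> = (\<Sum>b\<in>neighbours G a - {i}. real (card (neighbours G b - {a, i})))"
      by (rule sum.cong) auto
    finally show "state a ! 4 = \<dots>" .
  qed simp
  also have "\<dots> = real (count (Path 3) G i)"
    unfolding count_path_3[OF wf] by simp
  finally show ?thesis .
qed

lemma readout_cycle_4:
  "(\<Sum>j\<in>ego. (1 - state j ! 0) * (state j ! 3 * (state j ! 3 - 1) / 2)) = real (count (Cycle 4) G i)"
proof -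
  let ?m = "\<lambda>j. real (card (neighbours G j \<inter> neighbours G i))"
  have "(\<Sum>j\<in>ego. (1 - state j ! 0) * (state j ! 3 * (state j ! 3 - 1) / 2))
      = (\<Sum>j\<in>ego. of_bool (j \<noteq> i) * (?m j * (?m j - 1) / 2))"
    by (rule sum.cong) (simp_all add: counting_net_state of_bool_not_iff eq_commute[of i])
  also have "\<dots> = (\<Sum>j\<in>ego \<inter> {j. j \<noteq> i}. ?m j * (?m j - 1) / 2)"
    by (rule sum_of_bool_mult_eq[OF finite_ego_net])
  also have "\<dots> = (\<Sum>j\<in>ego - {i}. ?m j * (?m j - 1) / 2)"
    by (rule sum.cong) auto
  also have "\<dots> = (\<Sum>b\<in>verts G - {i}. ?m b * (?m b - 1) / 2)"
  proof (rule sum.mono_neutral_left)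
    show "\<forall>b\<in>verts G - {i} - (ego - {i}). ?m b * (?m b - 1) / 2 = 0"
    proof
      fix b assume "b \<in> verts G - {i} - (ego - {i})"
      then have "b \<notin> ego" by blast
      then show "?m b * (?m b - 1) / 2 = 0" by (simp add: common_neighbours_outside_ego)
    qed
  qed (use wf_graphD(1)[OF wf] in \<open>auto simp: subV_def\<close>)
  also have "\<dots> = real (2 * count (Cycle 4) G i) / 2"
    unfolding count_cycle_4[OF wf] of_nat_sum real_mult_pred sum_divide_distrib ..
  finally show ?thesis by simp
qed

lemma node_rep_counting_net_counts:
  "node_rep counting_net G i = map (\<lambda>S. real (count S G i)) [Cycle 3, Cycle 4, Path 2, Path 3]"
  unfolding node_rep_counting_net counting_shares_def
  by (simp only: list.map readout_cycle_3 readout_cycle_4 readout_path_2 readout_path_3)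

end

theorem theorem1:
  shows "\<forall>S \<in> {Cycle 3, Cycle 4, Path 2, Path 3}. can_count_node_level TYPE('v) S"
  unfolding can_count_node_level_def
proof (intro ballI allI impI)
  fix S and G\<^sub>1 G\<^sub>2 :: "'v graph" and i\<^sub>1 i\<^sub>2
  assume "S \<in> {Cycle 3, Cycle 4, Path 2, Path 3}" "wf_graph G\<^sub>1" "wf_graph G\<^sub>2"
    "i\<^sub>1 \<in> verts G\<^sub>1" "i\<^sub>2 \<in> verts G\<^sub>2" "count S G\<^sub>1 i\<^sub>1 \<noteq> count S G\<^sub>2 i\<^sub>2"
  then have "node_rep counting_net G\<^sub>1 i\<^sub>1 \<noteq> node_rep counting_net G\<^sub>2 i\<^sub>2"
    by (auto simp: node_rep_counting_net_counts)
  then show "\<exists>N. valid_mpnn N \<and> node_rep N G\<^sub>1 i\<^sub>1 \<noteq> node_rep N G\<^sub>2 i\<^sub>2"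
    using valid_counting_net by blast
qed

end
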